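(* Let $p$ be an odd prime and let $1\le \ell\le p-1$ be such that the Legendre symbol $\left(\frac{4\ell+1}{p}\right)=-1$. Then for all $n\ge0$, $$b\big(2(pn+\ell)\big)\equiv 0\pmod 4.$$ Furthermore, for every odd prime $p$ and all $n,k\ge0$, $$b\!\left(2p^{2k+2}n+\frac{p^{2k+2}-1}{2}\right)\equiv (-1)^{\frac{(k+1)(p-1)}{2}}\,p^{k+1}\,b(2n)\pmod 4.$$
   Context: The mock theta function $\mathcal{B}(q)=\sum_{n\ge0}\frac{q^n(-q;q^2)_n}{(q;q^2)_{n+1}}=\sum_{n\ge0}b(n)q^n$, where $(a;q)_n=\prod_{j=0}^{n-1}(1-aq^j)$. (The paper writes the second congruence equivalently as $b(2n)\equiv(-1)^{\frac{(k+1)(1-p)}{2}}p^{-k-1}b(\cdot)\pmod 4$, with $p^{-1}$ the inverse of $p$ modulo $4$.) *)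

theory Defs
  imports "HOL-Computational_Algebra.Formal_Power_Series" "HOL-Number_Theory.Number_Theory"
begin

text \<open>q-Pochhammer symbol (a;q^2)_n as a formal power series over int, with a = c * q:
  prod_{j<n} (1 - c q^(2j+1)).\<close>
definition qpoch_odd :: "int \<Rightarrow> nat \<Rightarrow> int fps" where
  "qpoch_odd c n = (\<Prod>j<n. 1 - fps_const c * fps_X ^ (2*j+1))"

text \<open>The n-th summand q^n (-q;q^2)_n / (q;q^2)_(n+1). The denominator has constant
  coefficient 1, so fps_right_inverse of it with value 1 is its multiplicative inverse.\<close>
definition B_term :: "nat \<Rightarrow> int fps" where
  "B_term n = fps_X ^ n * qpoch_odd (-1) n * fps_right_inverse (qpoch_odd 1 (Suc n)) 1"

text \<open>b(m): coefficient of q^m in B(q). Since B_term n has valuation >= n, only the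
  summands with n <= m contribute.\<close>
definition b :: "nat \<Rightarrow> int" where
  "b m = (\<Sum>n\<le>m. fps_nth (B_term n) m)"

end

(*
  Iterating Fine's transformation of the partial sums of sum_k (a;Q)_k t^k / (c;Q)_k turns B into

    B(q) = sum_(s>=0) q^(2s(s+1)) (-q;q^2)_s^2 (1 + q^(4s+2))
                        / ((q;q^2)_s (q;q^2)_(s+1) (1 - q^(2s+1))),

  an identity of formal power series over the integers. As (1 + x)^2 and (1 - x)^2 agree modulo 4,
  the s-th summand is congruent to q^(2s(s+1)) (1 + x^2) / (1 - x)^2 with x = q^(2s+1), and

    (1 + x^2) / (1 - x)^2 = 1 + 2x / (1 - x^2) + 4x^2 / ((1 - x) (1 - x^2)).

  Since x / (1 - x^2) has only odd powers of q, b(2m) is congruent to 1 or 0 modulo 4 according as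
  m is a pronic number s(s+1) or not. The theorem then reduces to elementary facts: m is pronic iff
  4m + 1 is a square, so pn + l is not pronic when 4l + 1 is a non-residue modulo p; for odd P the
  number P^2 n + (P^2 - 1)/4 is pronic iff n is; and (-1)^((p-1)/2) p is 1 modulo 4.
*)
theory Submission
  imports Defs
begin

unbundle fps_syntax

section \<open>A truncated form of Fine's transformation\<close>

text \<open>The inverse of f when f $ 0 = 1, junk otherwise.\<close>

abbreviation unit_inv :: "'a::comm_ring_1 fps \<Rightarrow> 'a fps" where
  "unit_inv f \<equiv> fps_right_inverse f 1"

lemma unit_inv_right: "f $ 0 = 1 \<Longrightarrow> f * unit_inv f = 1"
  by (simp add: fps_right_inverse)

lemma unit_inv_mult:
  "f $ 0 = 1 \<Longrightarrow> g $ 0 = 1 \<Longrightarrow> unit_inv (f * g) = unit_inv f * unit_inv g"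
  using fps_lr_inverse_mult_ring1(2)[of 1 f 1 g] by (simp add: mult.commute)

definition qpoch :: "'a::comm_ring_1 \<Rightarrow> 'a \<Rightarrow> nat \<Rightarrow> 'a" where
  "qpoch a Q k = (\<Prod>j<k. 1 - a * Q ^ j)"

lemma qpoch_0 [simp]: "qpoch a Q 0 = 1"
  by (simp add: qpoch_def)

lemma qpoch_Suc: "qpoch a Q (Suc k) = qpoch a Q k * (1 - a * Q ^ k)"
  by (simp add: qpoch_def)

lemma qpoch_Suc_shift: "qpoch a Q (Suc k) = (1 - a) * qpoch (a * Q) Q k"
  unfolding qpoch_def prod.lessThan_Suc_shift by (simp add: mult.assoc)

lemma qpoch_nth_0: "c $ 0 = 0 \<Longrightarrow> qpoch c Q k $ 0 = 1"
  by (induction k) (simp_all add: qpoch_Suc)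

definition fine_term ::
    "'a::comm_ring_1 fps \<Rightarrow> 'a fps \<Rightarrow> 'a fps \<Rightarrow> 'a fps \<Rightarrow> nat \<Rightarrow> 'a fps" where
  "fine_term a c t Q k = qpoch a Q k * t ^ k * unit_inv (qpoch c Q k)"

definition fine_sum ::
    "'a::comm_ring_1 fps \<Rightarrow> 'a fps \<Rightarrow> 'a fps \<Rightarrow> 'a fps \<Rightarrow> nat \<Rightarrow> 'a fps" where
  "fine_sum a c t Q K = (\<Sum>k<K. fine_term a c t Q k)"

lemma fine_term_0 [simp]: "fine_term a c t Q 0 = 1"
  by (simp add: fine_term_def fps_lr_inverse_one_one)

lemma fine_term_Suc:
  assumes "c $ 0 = 0"
  shows "fine_term a c t Q (Suc k) * (1 - c * Q ^ k) = t * (1 - a * Q ^ k) * fine_term a c t Q k"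
proof -
  have unit: "(1 - c * Q ^ k) $ 0 = 1" using assms by simp
  have "unit_inv (qpoch c Q (Suc k)) = unit_inv (qpoch c Q k) * unit_inv (1 - c * Q ^ k)"
    unfolding qpoch_Suc by (rule unit_inv_mult[OF qpoch_nth_0[OF assms] unit])
  then show ?thesis
    using unit_inv_right[OF unit] by (simp add: fine_term_def qpoch_Suc ac_simps)
qed

lemma fine_term_scale: "fine_term a c (t * Q) Q k = Q ^ k * fine_term a c t Q k"
  by (simp add: fine_term_def power_mult_distrib ac_simps)

lemma fine_sum_telescope:
  assumes "\<beta> $ 0 = 0"
  shows "(1 - t) * fine_sum a (\<beta> * Q) t Q K - (\<beta> - a * t) * fine_sum a (\<beta> * Q) (t * Q) Q K
       = (1 - \<beta>) - fine_term a (\<beta> * Q) t Q K * (1 - \<beta> * Q ^ K)"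
proof (induction K)
  case 0
  then show ?case by (simp add: fine_sum_def)
next
  case (Suc K)
  let ?T = "fine_term a (\<beta> * Q) t Q"
  have "(1 - t) * fine_sum a (\<beta> * Q) t Q (Suc K) - (\<beta> - a * t) * fine_sum a (\<beta> * Q) (t * Q) Q (Suc K)
      = ((1 - t) * fine_sum a (\<beta> * Q) t Q K - (\<beta> - a * t) * fine_sum a (\<beta> * Q) (t * Q) Q K)
        + ((1 - t) * ?T K - (\<beta> - a * t) * (Q ^ K * ?T K))"
    unfolding fine_sum_def sum.lessThan_Suc fine_term_scale by (simp add: algebra_simps)
  also have "\<dots> = (1 - \<beta>) - t * (1 - a * Q ^ K) * ?T K"
    unfolding Suc.IH by (simp add: algebra_simps)
  also have "t * (1 - a * Q ^ K) * ?T K = ?T (Suc K) * (1 - \<beta> * Q ^ Suc K)"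
    using fine_term_Suc[of "\<beta> * Q" a t Q K] assms by (simp add: mult.assoc)
  finally show ?case .
qed

lemma fine_sum_shift:
  assumes "c $ 0 = 0"
  shows "fine_sum a c (t * Q) Q (Suc K)
       = 1 + t * Q * (1 - a) * unit_inv (1 - c) * fine_sum (a * Q) (c * Q) (t * Q) Q K"
proof -
  have "fine_term a c (t * Q) Q (Suc k)
      = t * Q * (1 - a) * unit_inv (1 - c) * fine_term (a * Q) (c * Q) (t * Q) Q k" for k
  proof -
    have "unit_inv (qpoch c Q (Suc k)) = unit_inv (1 - c) * unit_inv (qpoch (c * Q) Q k)"
      unfolding qpoch_Suc_shift using assms by (simp add: unit_inv_mult qpoch_nth_0)
    then show ?thesis by (simp add: fine_term_def qpoch_Suc_shift algebra_simps)
  qed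
  then show ?thesis
    unfolding fine_sum_def sum.lessThan_Suc_shift by (simp add: sum_distrib_left)
qed

lemma fine_transformation_truncated:
  assumes "\<beta> $ 0 = 0"
  shows "t ^ Suc K dvd (1 - t) * fine_sum a (\<beta> * Q) t Q (Suc K)
     - ((1 - a * t) + (\<beta> - a * t) * t * Q * (1 - a) * unit_inv (1 - \<beta> * Q)
                                    * fine_sum (a * Q) (\<beta> * Q * Q) (t * Q) Q K)"
proof -
  let ?F = "fine_sum a (\<beta> * Q) t Q (Suc K)"
  let ?R = "t * Q * (1 - a) * unit_inv (1 - \<beta> * Q) * fine_sum (a * Q) (\<beta> * Q * Q) (t * Q) Q K"
  let ?T = "fine_term a (\<beta> * Q) t Q (Suc K)"
  have "(1 - t) * ?F - ((1 - a * t) + (\<beta> - a * t) * ?R)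
      = ((1 - t) * ?F - (\<beta> - a * t) * (1 + ?R)) - (1 - \<beta>)"
    by (simp add: algebra_simps)
  also have "\<dots> = - (?T * (1 - \<beta> * Q ^ Suc K))"
    using fine_sum_telescope[OF assms, of t a Q "Suc K"] fine_sum_shift[of "\<beta> * Q" a t Q K] assms
    by simp
  finally have "(1 - t) * ?F - ((1 - a * t) + (\<beta> - a * t) * ?R) = - (?T * (1 - \<beta> * Q ^ Suc K))" .
  moreover have "t ^ Suc K dvd ?T"
    unfolding fine_term_def by (simp add: dvd_mult dvd_mult2)
  ultimately show ?thesis by (simp add: mult.assoc)
qed

section \<open>Unfolding a recurrence modulo powers of X\<close>

lemma fps_X_power_dvd_nth: "fps_X ^ M dvd f \<Longrightarrow> m < M \<Longrightarrow> f $ m = 0"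
  by (auto elim!: dvdE simp: fps_X_power_mult_nth)

lemma fps_recurrence_unfold:
  fixes S :: "nat \<Rightarrow> nat \<Rightarrow> 'a::comm_ring_1 fps" and r l :: "nat \<Rightarrow> 'a fps"
  assumes step: "\<And>s K. fps_X ^ Suc K dvd S s (Suc K) - (r s + l s * S (Suc s) K)"
    and l: "\<And>s. fps_X dvd l s"
  shows "fps_X ^ M dvd S 0 (2 * M) - (\<Sum>s<M. (\<Prod>j<s. l j) * r s)"
proof -
  have unfolded: "fps_X ^ J dvd S 0 (N + J) - (\<Sum>s<N. (\<Prod>j<s. l j) * r s) - (\<Prod>j<N. l j) * S N J"
    for N J
  proof (induction N arbitrary: J)
    case 0
    show ?case by simp
  next
    case (Suc N)
    let ?L = "\<Prod>j<N. l j"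
    have X_J: "fps_X ^ J dvd fps_X ^ Suc J" by (simp add: le_imp_power_dvd)
    then have "fps_X ^ J dvd S 0 (N + Suc J) - (\<Sum>s<N. (\<Prod>j<s. l j) * r s) - ?L * S N (Suc J)"
      using Suc.IH by (rule dvd_trans)
    moreover have "fps_X ^ J dvd ?L * (S N (Suc J) - (r N + l N * S (Suc N) J))"
      using dvd_trans [OF X_J step] by (rule dvd_mult)
    ultimately have "fps_X ^ J dvd (S 0 (N + Suc J) - (\<Sum>s<N. (\<Prod>j<s. l j) * r s) - ?L * S N (Suc J))
        + ?L * (S N (Suc J) - (r N + l N * S (Suc N) J))"
      by (rule dvd_add)
    then show ?case by (simp add: algebra_simps)
  qed
  have "fps_X ^ M = (\<Prod>j<M. fps_X)" by simp
  also have "\<dots> dvd (\<Prod>j<M. l j)" by (rule prod_dvd_prod) (rule l)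
  finally have "fps_X ^ M dvd (\<Prod>j<M. l j) * S M M" by (rule dvd_mult2)
  with unfolded[of M M] have "fps_X ^ M dvd S 0 (M + M) - (\<Sum>s<M. (\<Prod>j<s. l j) * r s)
      - (\<Prod>j<M. l j) * S M M + (\<Prod>j<M. l j) * S M M"
    by (rule dvd_add)
  then show ?thesis by (simp add: mult_2)
qed

section \<open>An expansion of B\<close>

definition X_odd :: "nat \<Rightarrow> int fps" where
  "X_odd s = fps_X ^ (2 * s + 1)"

lemma X_odd_nth_0 [simp]: "X_odd s $ 0 = 0"
  by (simp add: X_odd_def)

lemma X_odd_Suc: "X_odd (Suc s) = X_odd s * fps_X ^ 2"
  by (simp add: X_odd_def power_add [symmetric])

lemma fps_X_dvd_X_odd: "fps_X dvd X_odd s"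
  by (simp add: X_odd_def)

text \<open>B_level 0 K is (1 - q) times the K-th partial sum of B, and each application of Fine's
  transformation passes from B_level s to B_level (s + 1).\<close>

definition B_level :: "nat \<Rightarrow> nat \<Rightarrow> int fps" where
  "B_level s K = fine_sum (- X_odd s) (X_odd (Suc s)) (X_odd s) (fps_X ^ 2) K"

definition B_rho :: "nat \<Rightarrow> int fps" where
  "B_rho s = (1 + X_odd s ^ 2) * unit_inv (1 - X_odd s)"

definition B_lambda :: "nat \<Rightarrow> int fps" where
  "B_lambda s = (X_odd s * fps_X) ^ 2 * (1 + X_odd s) ^ 2
                 * unit_inv (1 - X_odd s) * unit_inv (1 - X_odd (Suc s))"

lemma fps_X_dvd_B_lambda: "fps_X dvd B_lambda s"
  unfolding B_lambda_def power2_eq_square by (simp add: dvd_mult dvd_mult2)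

lemma B_level_step:
  "fps_X ^ Suc K dvd B_level s (Suc K) - (B_rho s + B_lambda s * B_level (Suc s) K)"
proof -
  let ?y = "X_odd s" and ?u = "unit_inv (1 - X_odd s)"
  let ?E = "(1 - ?y) * B_level s (Suc K)
      - ((1 + ?y * ?y) + (?y + ?y * ?y) * ?y * fps_X ^ 2 * (1 + ?y) * unit_inv (1 - X_odd (Suc s))
           * B_level (Suc s) K)"
  have "fps_X ^ Suc K dvd ?y ^ Suc K"
    using fps_X_dvd_X_odd by (rule dvd_power_same)
  also have "?y ^ Suc K dvd ?E"
    using fine_transformation_truncated[where \<beta> = ?y and t = ?y and a = "- ?y" and Q = "fps_X ^ 2"]
    by (simp add: B_level_def X_odd_Suc mult.assoc)
  also have "\<dots> dvd ?u * ?E"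
    by simp
  also have "?u * ?E = ((1 - ?y) * ?u) * B_level s (Suc K) - (B_rho s + B_lambda s * B_level (Suc s) K)"
    unfolding B_rho_def B_lambda_def by (simp add: algebra_simps power2_eq_square)
  also have "(1 - ?y) * ?u = 1"
    by (simp add: unit_inv_right)
  finally show ?thesis
    by simp
qed

definition B_summand :: "nat \<Rightarrow> int fps" where
  "B_summand s = unit_inv (1 - fps_X) * (\<Prod>j<s. B_lambda j) * B_rho s"

lemma qpoch_odd_eq_qpoch: "qpoch_odd c n = qpoch (fps_const c * fps_X) (fps_X ^ 2) n"
  unfolding qpoch_odd_def qpoch_def
  by (simp add: power_mult [symmetric] power_Suc2 mult.assoc)

lemma B_term_eq_fine_term:
  "B_term n = unit_inv (1 - fps_X) * fine_term (- X_odd 0) (X_odd 1) (X_odd 0) (fps_X ^ 2) n"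
proof -
  have "fps_X * fps_X ^ 2 = X_odd 1"
    by (simp add: X_odd_def power3_eq_cube power2_eq_square)
  then have "qpoch_odd 1 (Suc n) = (1 - fps_X) * qpoch (X_odd 1) (fps_X ^ 2) n"
    by (simp add: qpoch_odd_eq_qpoch qpoch_Suc_shift)
  then have "unit_inv (qpoch_odd 1 (Suc n)) = unit_inv (1 - fps_X) * unit_inv (qpoch (X_odd 1) (fps_X ^ 2) n)"
    by (simp add: unit_inv_mult qpoch_nth_0)
  moreover have "qpoch_odd (-1) n = qpoch (- X_odd 0) (fps_X ^ 2) n"
    unfolding qpoch_odd_eq_qpoch by (simp add: X_odd_def flip: fps_const_neg)
  ultimately show ?thesis
    unfolding B_term_def fine_term_def by (simp add: X_odd_def ac_simps)
qed

lemma b_eq_B_level_nth: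
  assumes "m < K"
  shows "b m = (unit_inv (1 - fps_X) * B_level 0 K) $ m"
proof -
  have "b m = (\<Sum>n<K. B_term n $ m)"
    unfolding b_def
    by (rule sum.mono_neutral_left) (use assms in \<open>auto simp: B_term_def mult.assoc fps_X_power_mult_nth\<close>)
  then show ?thesis
    by (simp add: B_level_def fine_sum_def B_term_eq_fine_term fps_sum_nth sum_distrib_left)
qed

lemma b_expansion: "b m = (\<Sum>s<Suc m. B_summand s $ m)"
proof -
  let ?T = "\<Sum>s<Suc m. (\<Prod>j<s. B_lambda j) * B_rho s"
  have "fps_X ^ Suc m dvd unit_inv (1 - fps_X) * (B_level 0 (2 * Suc m) - ?T)"
    using fps_recurrence_unfold[where S = B_level, OF B_level_step fps_X_dvd_B_lambda] by (rule dvd_mult)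
  then have "(unit_inv (1 - fps_X) * (B_level 0 (2 * Suc m) - ?T)) $ m = 0"
    by (rule fps_X_power_dvd_nth) simp
  moreover have "b m = (unit_inv (1 - fps_X) * B_level 0 (2 * Suc m)) $ m"
    by (rule b_eq_B_level_nth) simp
  ultimately show ?thesis
    by (simp add: B_summand_def algebra_simps sum_distrib_left fps_sum_nth)
qed

section \<open>Pronic numbers\<close>

definition pronic :: "nat \<Rightarrow> bool" where
  "pronic m \<longleftrightarrow> (\<exists>s. m = s * (s + 1))"

lemma sum_of_bool_pronic:
  "(\<Sum>s<Suc (2 * m). of_bool (m = s * (s + 1)) :: int) = of_bool (pronic m)"
proof -
  have sum: "(\<Sum>s<Suc (2 * m). of_bool (m = s * (s + 1)) :: int)
      = of_nat (card ({..<Suc (2 * m)} \<inter> {s. m = s * (s + 1)}))"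
    by (simp only: sum_of_bool_eq finite_lessThan)
  show ?thesis
  proof (cases "pronic m")
    case True
    then obtain s0 where m: "m = s0 * (s0 + 1)" by (auto simp: pronic_def)
    have "inj (\<lambda>s::nat. s * (s + 1))"
      by (rule strict_mono_imp_inj_on, rule strict_monoI) (auto intro!: add_strict_mono mult_strict_mono)
    then have root: "m = s * (s + 1) \<longleftrightarrow> s = s0" for s
      using m by (auto dest: injD)
    have "s0 < Suc (2 * m)"
      using m by (cases s0) auto
    then have "{..<Suc (2 * m)} \<inter> {s. m = s * (s + 1)} = {s0}"
      using root by auto
    then show ?thesis
      unfolding sum using True by simp
  next
    case False
    then have "{..<Suc (2 * m)} \<inter> {s. m = s * (s + 1)} = {}"
      by (auto simp: pronic_def)
    then show ?thesis
      unfolding sum using False by simp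
  qed
qed

lemma pronic_iff_square: "pronic m \<longleftrightarrow> (\<exists>w. 4 * m + 1 = w ^ 2)"
proof
  assume "pronic m"
  then obtain s where "m = s * (s + 1)" by (auto simp: pronic_def)
  then have "4 * m + 1 = (2 * s + 1) ^ 2" by (simp add: power2_eq_square algebra_simps)
  then show "\<exists>w. 4 * m + 1 = w ^ 2" ..
next
  assume "\<exists>w. 4 * m + 1 = w ^ 2"
  then obtain w where w: "4 * m + 1 = w ^ 2" ..
  then have "odd (w ^ 2)" by (metis even_add even_mult_iff even_numeral odd_one)
  then have "odd w" by simp
  then obtain t where "w = 2 * t + 1" by (auto elim: oddE)
  with w have "m = t * (t + 1)" by (simp add: power2_eq_square algebra_simps)
  then show "pronic m" by (auto simp: pronic_def)
qed

lemma square_mult_square_iff: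
  fixes P a :: nat
  assumes "0 < P"
  shows "(\<exists>v. P ^ 2 * a = v ^ 2) \<longleftrightarrow> (\<exists>w. a = w ^ 2)"
proof
  assume "\<exists>v. P ^ 2 * a = v ^ 2"
  then obtain v where v: "P ^ 2 * a = v ^ 2" ..
  then have "P ^ 2 dvd v ^ 2" by (metis dvd_triv_left)
  then obtain w where "v = P * w" by (auto simp: pow_divides_pow_iff elim: dvdE)
  with v assms have "a = w ^ 2" by (simp add: power_mult_distrib)
  then show "\<exists>w. a = w ^ 2" ..
next
  assume "\<exists>w. a = w ^ 2"
  then obtain w where "a = w ^ 2" ..
  then have "P ^ 2 * a = (P * w) ^ 2" by (simp add: power_mult_distrib)
  then show "\<exists>v. P ^ 2 * a = v ^ 2" ..
qed

lemma pronic_odd_square_shift: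
  assumes "odd P"
  shows "pronic (P ^ 2 * n + (P ^ 2 - 1) div 4) \<longleftrightarrow> pronic n"
proof -
  obtain r where "P = 2 * r + 1" using assms by (auto elim: oddE)
  then have P2: "P ^ 2 = 4 * (r * (r + 1)) + 1"
    by (simp add: power2_eq_square algebra_simps)
  have "pronic (P ^ 2 * n + (P ^ 2 - 1) div 4) \<longleftrightarrow> (\<exists>w. P ^ 2 * (4 * n + 1) = w ^ 2)"
    unfolding pronic_iff_square P2 by (simp add: algebra_simps)
  also have "\<dots> \<longleftrightarrow> (\<exists>w. 4 * n + 1 = w ^ 2)"
    by (rule square_mult_square_iff) (use assms in \<open>simp add: odd_pos\<close>)
  finally show ?thesis
    by (simp add: pronic_iff_square)
qed

lemma not_pronic_of_Legendre_eq_minus_one: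
  assumes "Legendre (int (4 * l + 1)) (int p) = -1"
  shows "\<not> pronic (p * n + l)"
proof
  assume "pronic (p * n + l)"
  then obtain w where "4 * (p * n + l) + 1 = w ^ 2"
    by (auto simp: pronic_iff_square)
  then have "int (w ^ 2) = int (4 * (p * n + l) + 1)"
    by simp
  then have "int w ^ 2 = int (4 * l + 1) + int p * (4 * int n)"
    by (simp add: algebra_simps)
  then have "[int w ^ 2 = int (4 * l + 1)] (mod int p)"
    by (simp add: cong_iff_dvd_diff)
  then have "QuadRes (int p) (int (4 * l + 1))"
    unfolding QuadRes_def by blast
  with assms show False
    unfolding Legendre_def by (metis one_neq_neg_one zero_neq_neg_one)
qed

section \<open>Reduction modulo 4\<close>

lemma prod_diff_dvd:
  fixes f g :: "'b \<Rightarrow> 'a::comm_ring_1"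
  assumes "\<And>j. j \<in> A \<Longrightarrow> d dvd f j - g j"
  shows "d dvd prod f A - prod g A"
  using assms
proof (induction A rule: infinite_finite_induct)
  case (insert x F)
  have "prod f (insert x F) - prod g (insert x F) = f x * (prod f F - prod g F) + (f x - g x) * prod g F"
    using insert.hyps by (simp add: algebra_simps)
  then show ?case
    using insert.IH insert.prems by (simp add: dvd_add dvd_mult dvd_mult2)
qed simp_all

lemma fps_nth_cong_of_dvd:
  fixes f g :: "int fps"
  assumes "numeral k dvd f - g"
  shows "[f $ i = g $ i] (mod numeral k)"
proof -
  obtain h where "f - g = numeral k * h"
    using assms by (auto elim: dvdE)
  then have "f $ i - g $ i = numeral k * h $ i"
    by (metis fps_sub_nth fps_mult_left_const_nth numeral_fps_const)
  then show ?thesis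
    by (simp add: cong_iff_dvd_diff)
qed

lemma one_plus_square_div_square:
  fixes y u w :: "'a::comm_ring_1"
  assumes "u * (1 - y) = 1" and "w * (1 - y ^ 2) = 1"
  shows "(1 + y ^ 2) * u ^ 2 = 1 + 2 * y * w + 4 * y ^ 2 * u * w"
proof -
  have "u ^ 2 = u ^ 2 * (w * (1 - y ^ 2))"
    using assms(2) by simp
  also have "\<dots> = (u * (1 - y)) * (u * w * (1 + y))"
    by (simp add: algebra_simps power2_eq_square)
  also have "\<dots> = u * w * (1 + y)"
    using assms(1) by simp
  also have "\<dots> = (u * (1 - y)) * w + 2 * y * u * w"
    by (simp add: algebra_simps)
  also have "\<dots> = w + 2 * y * u * w"
    using assms(1) by simp
  finally have u_square: "u ^ 2 = w + 2 * y * u * w" .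
  have "(1 + y ^ 2) * u ^ 2 = (u * (1 - y)) ^ 2 + 2 * y * u ^ 2"
    by (simp add: algebra_simps power2_eq_square)
  also have "\<dots> = 1 + 2 * y * (w + 2 * y * u * w)"
    using assms(1) u_square by simp
  finally show ?thesis
    by (simp add: algebra_simps power2_eq_square)
qed

lemma unit_inv_one_minus_X_power:
  assumes "0 < n"
  shows "unit_inv (1 - fps_X ^ n :: 'a::comm_ring_1 fps) = Abs_fps (\<lambda>i. of_bool (n dvd i))"
proof (rule fps_lr_inverse_unique_ring1(2) [where g = "Abs_fps (\<lambda>i. of_bool (n dvd i))", simplified])
  show "(1 - fps_X ^ n) * Abs_fps (\<lambda>i. of_bool (n dvd i)) = (1 :: 'a fps)"
  proof (rule fps_ext)
    fix i
    show "((1 - fps_X ^ n) * Abs_fps (\<lambda>i. of_bool (n dvd i))) $ i = (1 :: 'a fps) $ i"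
      using assms by (auto simp: algebra_simps fps_X_power_mult_nth dvd_minus_self nat_dvd_not_less)
  qed
  show "(1 - fps_X ^ n :: 'a fps) $ 0 = 1"
    using assms by simp
qed

lemma B_lambda_prod:
  "unit_inv (1 - fps_X) * (\<Prod>j<s. B_lambda j)
     = fps_X ^ (2 * s * (s + 1)) * (\<Prod>j<s. (1 + X_odd j) ^ 2)
       * (\<Prod>j<s. unit_inv (1 - X_odd j)) * (\<Prod>j<Suc s. unit_inv (1 - X_odd j))"
proof (induction s)
  case 0
  then show ?case by (simp add: X_odd_def)
next
  case (Suc s)
  have exponent: "fps_X ^ (2 * s * (s + 1)) * (X_odd s * fps_X) ^ 2 = fps_X ^ (2 * Suc s * (Suc s + 1))"
  proof -
    have "X_odd s * fps_X = fps_X ^ (2 * s + 2)"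
      by (simp add: X_odd_def flip: power_Suc2)
    then have "fps_X ^ (2 * s * (s + 1)) * (X_odd s * fps_X) ^ 2 = fps_X ^ (2 * s * (s + 1) + (2 * s + 2) * 2)"
      by (simp only: power_add power_mult)
    also have "2 * s * (s + 1) + (2 * s + 2) * 2 = 2 * Suc s * (Suc s + 1)"
      by (simp add: algebra_simps)
    finally show ?thesis .
  qed
  show ?case
    unfolding prod.lessThan_Suc [of B_lambda] mult.assoc [symmetric] Suc.IH exponent [symmetric]
    unfolding B_lambda_def prod.lessThan_Suc by (simp only: mult_ac)
qed

lemma prod_one_minus_X_odd_square:
  "(\<Prod>j<s. (1 - X_odd j) ^ 2) * (\<Prod>j<s. unit_inv (1 - X_odd j))
     * (\<Prod>j<Suc s. unit_inv (1 - X_odd j)) = unit_inv (1 - X_odd s)"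
proof -
  have "(\<Prod>j<s. (1 - X_odd j) * unit_inv (1 - X_odd j)) = 1"
    by (simp add: unit_inv_right)
  then have "((\<Prod>j<s. 1 - X_odd j) * (\<Prod>j<s. unit_inv (1 - X_odd j))) ^ 2 * unit_inv (1 - X_odd s)
      = unit_inv (1 - X_odd s)"
    by (simp add: prod.distrib)
  then show ?thesis
    by (simp add: power2_eq_square prod.distrib [symmetric] ac_simps)
qed

definition B_summand_mod4 :: "nat \<Rightarrow> int fps" where
  "B_summand_mod4 s = fps_X ^ (2 * s * (s + 1)) * (1 + 2 * X_odd s * unit_inv (1 - X_odd s ^ 2))"

lemma B_summand_cong: "4 dvd B_summand s - B_summand_mod4 s"
proof -
  let ?E = "fps_X ^ (2 * s * (s + 1))" and ?y = "X_odd s"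
  let ?u = "unit_inv (1 - ?y)" and ?w = "unit_inv (1 - ?y ^ 2)"
  define A where "A = (\<Prod>j<s. (1 + X_odd j) ^ 2)"
  define A' where "A' = (\<Prod>j<s. (1 - X_odd j) ^ 2)"
  define R where "R = (\<Prod>j<s. unit_inv (1 - X_odd j)) * (\<Prod>j<Suc s. unit_inv (1 - X_odd j))"
  \<comment> \<open>A is congruent to A' modulo 4, and A' cancels against the denominators R.\<close>
  have "A' * R = ?u"
    using prod_one_minus_X_odd_square by (simp add: A'_def R_def mult.assoc)
  then have "?E * (A' * R) * ?u * (1 + ?y ^ 2) = ?E * ((1 + ?y ^ 2) * ?u ^ 2)"
    by (simp add: power2_eq_square ac_simps)
  also have "(1 + ?y ^ 2) * ?u ^ 2 = 1 + 2 * ?y * ?w + 4 * ?y ^ 2 * ?u * ?w"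
    by (rule one_plus_square_div_square) (simp_all add: unit_inv_right mult.commute)
  finally have "?E * (1 + 2 * ?y * ?w) = ?E * (A' * R) * ?u * (1 + ?y ^ 2) - 4 * (?E * ?y ^ 2 * ?u * ?w)"
    by (simp add: algebra_simps)
  moreover have "B_summand s = ?E * A * R * ?u * (1 + ?y ^ 2)"
    unfolding B_summand_def B_lambda_prod B_rho_def A_def R_def by (simp only: mult_ac)
  ultimately have "B_summand s - B_summand_mod4 s
      = (A - A') * (?E * R * ?u * (1 + ?y ^ 2)) + 4 * (?E * ?y ^ 2 * ?u * ?w)"
    by (simp add: B_summand_mod4_def algebra_simps)
  moreover have "4 dvd A - A'"
    unfolding A_def A'_def
    by (rule prod_diff_dvd) (simp add: power2_eq_square algebra_simps)
  ultimately show ?thesis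
    by (simp add: dvd_add dvd_mult2)
qed

lemma B_summand_mod4_even_nth: "B_summand_mod4 s $ (2 * m) = of_bool (m = s * (s + 1))"
proof -
  define d where "d = 2 * s + 1"
  define E where "E = 2 * s * (s + 1)"
  have square: "X_odd s ^ 2 = fps_X ^ (2 * d)"
    by (simp only: X_odd_def d_def [symmetric] mult.commute [of 2 d] power_mult)
  have W: "unit_inv (1 - X_odd s ^ 2) = Abs_fps (\<lambda>i. of_bool (2 * d dvd i))"
    unfolding square by (rule unit_inv_one_minus_X_power) (simp add: d_def)
  have "B_summand_mod4 s = fps_X ^ E + 2 * (fps_X ^ (E + d) * Abs_fps (\<lambda>i. of_bool (2 * d dvd i)))"
    unfolding B_summand_mod4_def W E_def [symmetric] by (simp add: X_odd_def d_def power_add algebra_simps)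
  moreover have "(fps_X ^ (E + d) * Abs_fps (\<lambda>i. of_bool (2 * d dvd i))) $ (2 * m) = (0 :: int)"
  proof -
    have "\<not> 2 * d dvd 2 * m - (E + d)" if "E + d \<le> 2 * m"
    proof -
      have "odd (2 * m - (E + d))" using that by (simp add: E_def d_def)
      then show ?thesis by (auto dest: dvd_mult_left)
    qed
    then show ?thesis by (simp add: fps_X_power_mult_nth)
  qed
  ultimately show ?thesis
    by (simp add: numeral_fps_const E_def)
qed

lemma b_even_cong: "[b (2 * m) = of_bool (pronic m)] (mod 4)"
proof -
  have "[b (2 * m) = (\<Sum>s<Suc (2 * m). of_bool (m = s * (s + 1)))] (mod 4)"
    unfolding b_expansion
  proof (rule cong_sum)
    fix s
    show "[B_summand s $ (2 * m) = of_bool (m = s * (s + 1))] (mod 4)"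
      using B_summand_cong [of s, THEN fps_nth_cong_of_dvd, of "2 * m"]
      unfolding B_summand_mod4_even_nth .
  qed
  then show ?thesis by (simp only: sum_of_bool_pronic)
qed

lemma b_odd_square_shift_cong:
  assumes "odd P"
  shows "[b (2 * P ^ 2 * n + (P ^ 2 - 1) div 2) = b (2 * n)] (mod 4)"
proof -
  obtain r where "P = 2 * r + 1" using assms by (auto elim: oddE)
  then have "P ^ 2 - 1 = 4 * (r * (r + 1))"
    by (simp add: power2_eq_square algebra_simps)
  then have index: "2 * P ^ 2 * n + (P ^ 2 - 1) div 2 = 2 * (P ^ 2 * n + (P ^ 2 - 1) div 4)"
    by simp
  have "[b (2 * P ^ 2 * n + (P ^ 2 - 1) div 2) = of_bool (pronic n)] (mod 4)"
    using b_even_cong [of "P ^ 2 * n + (P ^ 2 - 1) div 4"]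
    unfolding index pronic_odd_square_shift [OF assms] .
  also have "[of_bool (pronic n) = b (2 * n)] (mod 4)"
    by (rule cong_sym) (rule b_even_cong)
  finally show ?thesis .
qed

lemma sign_times_power_cong_one:
  fixes p :: nat
  assumes "odd p"
  shows "[(-1) ^ ((k + 1) * (p - 1) div 2) * int p ^ (k + 1) = 1] (mod 4)"
proof -
  obtain h where p_eq: "p = 2 * h + 1" using assms by (auto elim: oddE)
  then have p: "int p = 2 * int h + 1" by simp
  have "[(-1) ^ h * int p = 1] (mod 4)"
  proof (cases "even h")
    case True
    then obtain q where "h = 2 * q" ..
    then show ?thesis unfolding p by (simp add: cong_iff_dvd_diff)
  next
    case False
    then obtain q where "h = 2 * q + 1" by (auto elim: oddE)
    then show ?thesis unfolding p by (simp add: cong_iff_dvd_diff)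
  qed
  then have "[((-1) ^ h * int p) ^ (k + 1) = 1 ^ (k + 1)] (mod 4)"
    by (rule cong_pow)
  moreover have "(k + 1) * (p - 1) div 2 = h * (k + 1)"
    by (simp add: p_eq)
  ultimately show ?thesis
    by (simp only: power_mult power_mult_distrib power_one)
qed

theorem theorem1p5:
  fixes p :: nat
  assumes "prime p" and "odd p"
  shows "(\<forall>l n. 1 \<le> l \<and> l \<le> p - 1 \<and> Legendre (int (4*l+1)) (int p) = -1
            \<longrightarrow> [b (2*(p*n+l)) = 0] (mod 4))
       \<and> (\<forall>n k. [b (2 * p^(2*k+2) * n + (p^(2*k+2) - 1) div 2)
                 = (-1)^((k+1)*(p-1) div 2) * int p^(k+1) * b (2*n)] (mod 4))"
proof (intro conjI allI impI)
  fix l n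
  assume "1 \<le> l \<and> l \<le> p - 1 \<and> Legendre (int (4*l+1)) (int p) = -1"
  then have "\<not> pronic (p * n + l)"
    using not_pronic_of_Legendre_eq_minus_one by blast
  then show "[b (2*(p*n+l)) = 0] (mod 4)"
    using b_even_cong [of "p * n + l"] by simp
next
  fix n k
  have "p ^ (2 * k + 2) = (p ^ (k + 1)) ^ 2"
    unfolding power_mult [symmetric] by (simp add: algebra_simps)
  then have "[b (2 * p^(2*k+2) * n + (p^(2*k+2) - 1) div 2) = b (2 * n)] (mod 4)"
    using b_odd_square_shift_cong [of "p ^ (k + 1)" n] assms(2) by simp
  also have "[b (2 * n) = (-1)^((k+1)*(p-1) div 2) * int p^(k+1) * b (2*n)] (mod 4)"
    using cong_mult [OF sign_times_power_cong_one [OF assms(2)] cong_refl, of k "b (2 * n)"]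
    by (simp add: cong_sym)
  finally show "[b (2 * p^(2*k+2) * n + (p^(2*k+2) - 1) div 2)
                 = (-1)^((k+1)*(p-1) div 2) * int p^(k+1) * b (2*n)] (mod 4)" .
qed

end
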